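(* Let $n,k$ be integers with $2\le k\le n/2$. For every Gutkin $(n,k)$-gon, the contact angle equals $\pi(k-1)/n$.
   Context: Let $P$ be a convex $n$-gon in the Euclidean plane with vertices $v_0,\dots,v_{n-1}$ in their cyclic (counterclockwise) order, indices taken modulo $n$. $P$ is a Gutkin $(n,k)$-gon if there exists an angle $\alpha$ (the contact angle) such that for every $i$, $\angle v_{i+1}v_iv_{i+k}=\angle v_{i+k-1}v_{i+k}v_i=\alpha$, where $\angle abc$ denotes the angle at $b$ between the segments $ba$ and $bc$. *)

theory Defs
  imports "HOL-Analysis.Analysis"
begin

definition angle_at :: "complex \<Rightarrow> complex \<Rightarrow> complex \<Rightarrow> real" where
  "angle_at a b c = arccos (((a - b) \<bullet> (c - b)) / (norm (a - b) * norm (c - b)))"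

text \<open>Cross product of plane vectors: positive iff y is counterclockwise from x.\<close>
definition cross :: "complex \<Rightarrow> complex \<Rightarrow> real" where
  "cross x y = Im (cnj x * y)"

definition convex_ccw_polygon :: "nat \<Rightarrow> (nat \<Rightarrow> complex) \<Rightarrow> bool" where
  "convex_ccw_polygon n v \<longleftrightarrow> n \<ge> 3 \<and>
     (\<forall>i<n. \<forall>j<n. j \<noteq> i \<and> j \<noteq> (i + 1) mod n \<longrightarrow>
        cross (v ((i + 1) mod n) - v i) (v j - v i) > 0)"

definition gutkin_with_angle :: "nat \<Rightarrow> nat \<Rightarrow> (nat \<Rightarrow> complex) \<Rightarrow> real \<Rightarrow> bool" where
  "gutkin_with_angle n k v \<alpha> \<longleftrightarrow> convex_ccw_polygon n v \<and>
     (\<forall>i<n. angle_at (v ((i + 1) mod n)) (v i) (v ((i + k) mod n)) = \<alpha> \<and>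
            angle_at (v ((i + k - 1) mod n)) (v ((i + k) mod n)) (v i) = \<alpha>)"

definition gutkin_polygon :: "nat \<Rightarrow> nat \<Rightarrow> (nat \<Rightarrow> complex) \<Rightarrow> bool" where
  "gutkin_polygon n k v \<longleftrightarrow> (\<exists>\<alpha>. gutkin_with_angle n k v \<alpha>)"

end

theory Submission
  imports Defs
begin

text \<open>For each i the vertices v i, v (i+1), ..., v (i+k) span a convex (k+1)-gon, whose
  angle sum is (k-1)\<pi>. Its angles at v i and v (i+k) are both the contact angle \<alpha>, and its
  other angles are the interior angles of P at v (i+1), ..., v (i+k-1). Summing over all i,
  every interior angle of P is counted k-1 times, and the interior angles of P add up to
  (n-2)\<pi>; hence 2n\<alpha> + (k-1)(n-2)\<pi> = n(k-1)\<pi>, i.e. \<alpha> = \<pi>(k-1)/n.\<close>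

definition ccw_angle :: "complex \<Rightarrow> complex \<Rightarrow> complex \<Rightarrow> real" where
  "ccw_angle p q r = Arg (cnj (p - q) * (r - q))"

lemma Arg_mult_upper_half:
  assumes "Im z > 0" "Im w > 0" "Im u > 0" "r > 0" "z * w = of_real r * u"
  shows "Arg u = Arg z + Arg w"
proof -
  have "z \<noteq> 0" "w \<noteq> 0" using assms by auto
  moreover have "Arg (z * w) = Arg u" using assms(4,5) by simp
  moreover have "0 < Arg z" "Arg z < pi" "0 < Arg w" "Arg w < pi" "0 < Arg u"
    using assms Arg_lt_pi by blast+
  ultimately show ?thesis using Arg_times'
    by (smt (verit, ccfv_SIG) greaterThanAtMost_iff)
qed

lemma ccw_angle_add:
  assumes "cross (x - q) (y - q) > 0" "cross (y - q) (z - q) > 0" "cross (x - q) (z - q) > 0"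
  shows "ccw_angle x q z = ccw_angle x q y + ccw_angle y q z"
  unfolding ccw_angle_def
proof (rule Arg_mult_upper_half[where r = "(norm (y - q))\<^sup>2"])
  show "Im (cnj (x - q) * (y - q)) > 0" "Im (cnj (y - q) * (z - q)) > 0"
    "Im (cnj (x - q) * (z - q)) > 0"
    using assms by (auto simp: cross_def)
  then show "(norm (y - q))\<^sup>2 > 0" by auto
  show "cnj (x - q) * (y - q) * (cnj (y - q) * (z - q))
      = of_real ((norm (y - q))\<^sup>2) * (cnj (x - q) * (z - q))"
    unfolding complex_norm_square by (simp add: algebra_simps)
qed

lemma ccw_angle_triangle_sum:
  assumes "cross (q - p) (r - p) > 0"
  shows "ccw_angle q p r + ccw_angle r q p + ccw_angle p r q = pi"
proof -
  define A where "A = cnj (q - p) * (r - p)"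
  define B where "B = cnj (r - q) * (p - q)"
  define C where "C = cnj (p - r) * (q - r)"
  have Im_pos: "Im A > 0" "Im B > 0" "Im C > 0"
    using assms by (auto simp: A_def B_def C_def cross_def algebra_simps)
  then have "A \<noteq> 0" "B \<noteq> 0" "C \<noteq> 0" "A * B \<noteq> 0" by auto
  define s where "s = (norm (q - p))\<^sup>2 * (norm (r - q))\<^sup>2 * (norm (p - r))\<^sup>2"
  have "p \<noteq> q" "q \<noteq> r" "r \<noteq> p" using Im_pos by (auto simp: A_def B_def C_def)
  then have "s > 0" by (simp add: s_def)
  moreover have "A * B * C = - of_real s"
    unfolding A_def B_def C_def s_def of_real_mult complex_norm_square
    by (simp add: algebra_simps)
  ultimately have "Arg (A * B * C) = pi" by (simp add: Arg_eq_pi)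
  moreover have "0 < Arg A" "Arg A < pi" "0 < Arg B" "Arg B < pi" "0 < Arg C" "Arg C < pi"
    using Im_pos Arg_lt_pi by blast+
  ultimately have "Arg A + Arg B + Arg C = pi"
    using Arg_times'[OF \<open>A \<noteq> 0\<close> \<open>B \<noteq> 0\<close>] Arg_times'[OF \<open>A * B \<noteq> 0\<close> \<open>C \<noteq> 0\<close>]
    by (smt (verit, ccfv_SIG) greaterThanAtMost_iff)
  then show ?thesis by (simp add: ccw_angle_def A_def B_def C_def)
qed

lemma angle_at_eq_ccw_angle:
  assumes "cross (a - b) (c - b) > 0"
  shows "angle_at a b c = ccw_angle a b c"
proof -
  define w where "w = cnj (a - b) * (c - b)"
  have "Im w > 0" using assms by (simp add: w_def cross_def)
  then have "w \<noteq> 0" and Arg_w: "0 < Arg w" "Arg w < pi" using Arg_lt_pi by auto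
  have "(a - b) \<bullet> (c - b) = Re w" by (simp add: w_def inner_complex_def algebra_simps)
  moreover have "norm (a - b) * norm (c - b) = norm w"
    by (metis w_def norm_mult complex_mod_cnj)
  moreover have "Re w = norm w * cos (Arg w)" by (metis rcis_cmod_Arg Re_rcis)
  ultimately have "((a - b) \<bullet> (c - b)) / (norm (a - b) * norm (c - b)) = cos (Arg w)"
    using \<open>w \<noteq> 0\<close> by simp
  then show ?thesis
    unfolding angle_at_def ccw_angle_def w_def[symmetric] using Arg_w by (simp add: arccos_cos)
qed

lemma angle_at_commute: "angle_at a b c = angle_at c b a"
  by (simp add: angle_at_def inner_commute mult.commute)

lemma cross_rotate: "cross (b - a) (c - a) = cross (c - b) (a - b)"
  by (simp add: cross_def algebra_simps)

lemma mod_neq_if_dist_less: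
  fixes x y n :: nat
  assumes "x \<noteq> y" "y < x + n" "x < y + n"
  shows "x mod n \<noteq> y mod n"
proof -
  have False if "a < b" "b < a + n" "a mod n = b mod n" for a b :: nat
  proof -
    have "n dvd (b - a)" using that mod_eq_dvd_iff_nat[of a b n] by simp
    with that(1,2) show False
      by (metis dvd_imp_le less_diff_conv2 add.commute less_imp_le not_less zero_less_diff)
  qed
  with assms show ?thesis by (metis linorder_neqE_nat)
qed

text \<open>Vertices indexed by all naturals, periodically; this avoids reducing indices mod n
  inside sums over windows that wrap around. The predecessor of j is written j + n - 1,
  since j - 1 would truncate at j = 0.\<close>

definition vertex :: "nat \<Rightarrow> (nat \<Rightarrow> complex) \<Rightarrow> nat \<Rightarrow> complex" where
  "vertex n v j = v (j mod n)"

definition interior_angle :: "nat \<Rightarrow> (nat \<Rightarrow> complex) \<Rightarrow> nat \<Rightarrow> real" where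
  "interior_angle n v j = ccw_angle (vertex n v (j + 1)) (vertex n v j) (vertex n v (j + n - 1))"

lemma vertex_add_period [simp]: "vertex n v (j + n) = vertex n v j"
  by (simp add: vertex_def)

lemma vertex_add_period_minus_1: "1 \<le> j \<Longrightarrow> vertex n v (j + n - 1) = vertex n v (j - 1)"
  by (metis vertex_add_period add.commute add_diff_assoc2)

lemma convex_ccw_polygon_ge_3: "convex_ccw_polygon n v \<Longrightarrow> n \<ge> 3"
  by (simp add: convex_ccw_polygon_def)

lemma convex_ccw_polygon_cross_pos:
  assumes "convex_ccw_polygon n v" "q mod n \<noteq> p mod n" "q mod n \<noteq> (p + 1) mod n"
  shows "cross (vertex n v (p + 1) - vertex n v p) (vertex n v q - vertex n v p) > 0"
proof -
  have "(p mod n + 1) mod n = (p + 1) mod n" by (metis mod_add_left_eq)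
  with assms show ?thesis
    unfolding convex_ccw_polygon_def vertex_def
    by (metis mod_less_divisor neq0_conv not_numeral_le_zero)
qed

text \<open>Angle sum of the convex polygon v i, v (i+1), ..., v (i+m), triangulated from v i.\<close>

lemma fan_angle_sum:
  assumes cv: "convex_ccw_polygon n v" and "2 \<le> m" "m < n"
  shows "ccw_angle (vertex n v (i + 1)) (vertex n v i) (vertex n v (i + m))
     + (\<Sum>j\<in>{i+1..<i+m}. interior_angle n v j)
     + ccw_angle (vertex n v i) (vertex n v (i + m)) (vertex n v (i + m - 1)) = (real m - 1) * pi"
proof -
  let ?V = "vertex n v"
  have n: "n \<ge> 3" using cv by (rule convex_ccw_polygon_ge_3)
  show ?thesis using assms(2,3)
  proof (induction m rule: nat_induct_at_least)
    case base
    have "cross (?V (i + 1 + 1) - ?V (i + 1)) (?V i - ?V (i + 1)) > 0"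
      by (rule convex_ccw_polygon_cross_pos[OF cv]) (rule mod_neq_if_dist_less; use n in linarith)+
    note triangle = ccw_angle_triangle_sum[OF this]
    have "interior_angle n v (i + 1) = ccw_angle (?V (i + 2)) (?V (i + 1)) (?V i)"
      unfolding interior_angle_def using vertex_add_period[of n v i]
      by (simp add: add.commute add.left_commute)
    with triangle show ?case by (simp add: numeral_2_eq_2 algebra_simps)
  next
    case (Suc m)
    \<comment> \<open>glue the triangle v i, v (i+m), v (i+m+1) onto the fan\<close>
    have idx: "i + m - 1 + 1 = i + m" "i + Suc m - 1 = i + m" "i + m + 1 = i + Suc m"
      using Suc by auto
    have c1: "cross (?V (i + m + 1) - ?V (i + m)) (?V i - ?V (i + m)) > 0"
      and c2: "cross (?V (i + m - 1 + 1) - ?V (i + m - 1)) (?V i - ?V (i + m - 1)) > 0"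
      and c3: "cross (?V (i + m + 1) - ?V (i + m)) (?V (i + m - 1) - ?V (i + m)) > 0"
      and c4: "cross (?V (i + 1) - ?V i) (?V (i + m) - ?V i) > 0"
      and c5: "cross (?V (i + 1) - ?V i) (?V (i + m + 1) - ?V i) > 0"
      by (rule convex_ccw_polygon_cross_pos[OF cv];
          (rule mod_neq_if_dist_less; use n Suc in linarith))+
    have c2': "cross (?V i - ?V (i + m)) (?V (i + m - 1) - ?V (i + m)) > 0"
      using c2 cross_rotate[where a = "?V (i + m - 1)" and b = "?V (i + m)" and c = "?V i"] idx(1)
      by simp
    have c1': "cross (?V (i + m) - ?V i) (?V (i + m + 1) - ?V i) > 0"
      using c1 cross_rotate[where a = "?V i" and b = "?V (i + m)" and c = "?V (i + m + 1)"] by simp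
    have "interior_angle n v (i + m) = ccw_angle (?V (i + m + 1)) (?V (i + m)) (?V (i + m - 1))"
      unfolding interior_angle_def using vertex_add_period_minus_1[of "i + m" n v] Suc by simp
    also have "\<dots> = ccw_angle (?V (i + m + 1)) (?V (i + m)) (?V i)
       + ccw_angle (?V i) (?V (i + m)) (?V (i + m - 1))"
      by (rule ccw_angle_add) (use c1 c3 c2' in auto)
    finally have split_new: "interior_angle n v (i + m) = \<dots>" .
    have triangle: "ccw_angle (?V (i + m + 1)) (?V (i + m)) (?V i)
        + ccw_angle (?V i) (?V (i + m + 1)) (?V (i + m))
        + ccw_angle (?V (i + m)) (?V i) (?V (i + m + 1)) = pi"
      by (rule ccw_angle_triangle_sum[OF c1])
    have split_first: "ccw_angle (?V (i + 1)) (?V i) (?V (i + m + 1))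
        = ccw_angle (?V (i + 1)) (?V i) (?V (i + m)) + ccw_angle (?V (i + m)) (?V i) (?V (i + m + 1))"
      by (rule ccw_angle_add) (use c4 c1' c5 in auto)
    have "(\<Sum>j\<in>{i+1..<i+Suc m}. interior_angle n v j)
        = (\<Sum>j\<in>{i+1..<i+m}. interior_angle n v j) + interior_angle n v (i + m)"
      using Suc by simp
    then show ?case using Suc triangle split_first split_new idx by (simp add: algebra_simps)
  qed
qed

lemma interior_angle_sum:
  assumes cv: "convex_ccw_polygon n v"
  shows "(\<Sum>j\<in>{t..<t+n}. interior_angle n v j) = (real n - 2) * pi"
proof -
  let ?V = "vertex n v"
  have n: "n \<ge> 3" using cv by (rule convex_ccw_polygon_ge_3)
  have fan: "ccw_angle (?V (t + 1)) (?V t) (?V (t + (n - 1)))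
     + (\<Sum>j\<in>{t+1..<t+(n-1)}. interior_angle n v j)
     + ccw_angle (?V t) (?V (t + (n - 1))) (?V (t + (n - 1) - 1)) = (real (n - 1) - 1) * pi"
    by (rule fan_angle_sum[OF cv]) (use n in auto)
  have first: "interior_angle n v t = ccw_angle (?V (t + 1)) (?V t) (?V (t + (n - 1)))"
    unfolding interior_angle_def using n by (simp add: add.commute)
  have "t + (n - 1) + 1 = t + n" "t + (n - 1) + n - 1 = (t + (n - 1) - 1) + n" using n by simp_all
  then have last: "interior_angle n v (t + (n - 1))
      = ccw_angle (?V t) (?V (t + (n - 1))) (?V (t + (n - 1) - 1))"
    unfolding interior_angle_def by (simp only: vertex_add_period)
  have "(\<Sum>j\<in>{t..<t+n}. interior_angle n v j)
      = interior_angle n v t + (\<Sum>j\<in>{t+1..<t+n}. interior_angle n v j)"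
    using n by (simp add: sum.atLeast_Suc_lessThan)
  moreover have "(\<Sum>j\<in>{t+1..<t+n}. interior_angle n v j)
      = (\<Sum>j\<in>{t+1..<t+(n-1)}. interior_angle n v j) + interior_angle n v (t + (n - 1))"
  proof -
    have "t + n = Suc (t + (n - 1))" using n by simp
    then show ?thesis by (simp only:) (rule sum.atLeastLessThan_Suc, use n in simp)
  qed
  ultimately show ?thesis using fan first last n by (simp add: of_nat_diff algebra_simps)
qed

text \<open>Each interior angle of P lies in k - 1 of the n windows {i+1, ..., i+k-1}.\<close>

lemma interior_angle_window_sum:
  assumes "convex_ccw_polygon n v" "1 \<le> k"
  shows "(\<Sum>i<n. \<Sum>j\<in>{i+1..<i+k}. interior_angle n v j) = (real k - 1) * ((real n - 2) * pi)"
proof -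
  have "(\<Sum>i<n. \<Sum>j\<in>{i+1..<i+k}. interior_angle n v j)
      = (\<Sum>i<n. \<Sum>t\<in>{1..<k}. interior_angle n v (t + i))"
    using sum.shift_bounds_nat_ivl[of "interior_angle n v" 1 _ k] by (simp add: add.commute)
  also have "\<dots> = (\<Sum>t\<in>{1..<k}. \<Sum>i<n. interior_angle n v (t + i))"
    by (rule sum.swap)
  also have "\<dots> = (\<Sum>t\<in>{1..<k}. (real n - 2) * pi)"
  proof (rule sum.cong[OF refl])
    fix t
    have "(\<Sum>i<n. interior_angle n v (t + i)) = (\<Sum>j\<in>{t..<t+n}. interior_angle n v j)"
      using sum.shift_bounds_nat_ivl[of "interior_angle n v" 0 t n]
      by (simp add: add.commute lessThan_atLeast0)
    then show "(\<Sum>i<n. interior_angle n v (t + i)) = (real n - 2) * pi"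
      using interior_angle_sum[OF assms(1)] by simp
  qed
  finally show ?thesis using assms(2) by (simp add: of_nat_diff)
qed

lemma gutkin_window_angle_sum:
  assumes g: "gutkin_with_angle n k v \<alpha>" and "2 \<le> k" "k < n" "i < n"
  shows "2 * \<alpha> + (\<Sum>j\<in>{i+1..<i+k}. interior_angle n v j) = (real k - 1) * pi"
proof -
  let ?V = "vertex n v"
  have cv: "convex_ccw_polygon n v" using g by (simp add: gutkin_with_angle_def)
  have c1: "cross (?V (i + 1) - ?V i) (?V (i + k) - ?V i) > 0"
    and c2: "cross (?V (i + k - 1 + 1) - ?V (i + k - 1)) (?V i - ?V (i + k - 1)) > 0"
    by (rule convex_ccw_polygon_cross_pos[OF cv];
        (rule mod_neq_if_dist_less; use assms in linarith))+
  have "i + k - 1 + 1 = i + k" using assms by simp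
  then have c2': "cross (?V i - ?V (i + k)) (?V (i + k - 1) - ?V (i + k)) > 0"
    using c2 cross_rotate[where a = "?V (i + k - 1)" and b = "?V (i + k)" and c = "?V i"] by simp
  have "?V i = v i" using \<open>i < n\<close> by (simp add: vertex_def)
  with g \<open>i < n\<close> have "ccw_angle (?V (i + 1)) (?V i) (?V (i + k)) = \<alpha>"
    and "ccw_angle (?V i) (?V (i + k)) (?V (i + k - 1)) = \<alpha>"
    using angle_at_eq_ccw_angle[OF c1] angle_at_eq_ccw_angle[OF c2'] angle_at_commute
    by (simp_all add: gutkin_with_angle_def vertex_def)
  then show ?thesis using fan_angle_sum[OF cv assms(2,3), of i] by simp
qed

theorem mainTheorem8:
  fixes n k :: nat and v :: "nat \<Rightarrow> complex" and \<alpha> :: real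
  assumes "2 \<le> k" and "2 * k \<le> n"
    and "gutkin_with_angle n k v \<alpha>"
  shows "\<alpha> = pi * (real k - 1) / real n"
proof -
  have cv: "convex_ccw_polygon n v" using assms(3) by (simp add: gutkin_with_angle_def)
  have "(\<Sum>i<n. 2 * \<alpha> + (\<Sum>j\<in>{i+1..<i+k}. interior_angle n v j)) = (\<Sum>i<n. (real k - 1) * pi)"
    using gutkin_window_angle_sum[OF assms(3,1)] assms(2) by simp
  then have "real n * (2 * \<alpha>) + (real k - 1) * ((real n - 2) * pi) = real n * ((real k - 1) * pi)"
    using interior_angle_window_sum[OF cv] assms(1) by (simp add: sum.distrib)
  then have "real n * \<alpha> = (real k - 1) * pi" by (simp add: algebra_simps)
  moreover have "n > 0" using assms(1,2) by simp
  ultimately show ?thesis by (simp add: field_simps)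
qed

end
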